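(* Let $p,q\ge1$, $N>\max(p,q)$, and let $\mu$ be a $q\times p$ matrix of measures. Let $b\in\{1,\dots,q\}$ and $a\in\{1,\dots,p\}$, and assume that the moment matrices $\mathscr M_{N,(n,m)}$ involved below admit Gauss--Borel factorizations $\mathscr M_{N,(n,m)}=\mathscr L_{N,(n,m)}^{-1}\mathscr U_{N,(n,m)}^{-1}$ with lower unitriangular $\mathscr L_{N,(n,m)}$ (and leading principal submatrices $\mathscr L_{k,(n,m)},\mathscr U_{k,(n,m)}$ for $k\le N$). Define \[\mathscr T^{[N,N-p]}_{(n,m)}:=\mathscr U_{N,(n,m)}^{-1}\big(\Lambda^{[N-p,N]}_{[p]}\big)^\top\mathscr U_{N-p,(n,m)},\qquad \mathscr T^{[N-q,N]}_{(n,m)}:=\mathscr L_{N-q,(n,m)}\Lambda^{[N-q,N]}_{[q]}\mathscr L_{N,(n,m)}^{-1},\] and $U_b:=\mathscr U_{N,(b,0)}^{-1}\mathscr U_{N,(b-1,0)}$, $L_a:=\mathscr L_{N,(0,a-1)}\mathscr L_{N,(0,a)}^{-1}$. Denote by $U_b^{[N-p]}$ and $L_a^{[N-q]}$ their leading principal submatrices of sizes $N-p$ and $N-q$. Then \[U_b\,\mathscr T^{[N,N-p]}_{(b-1,0)}\big(U_b^{[N-p]}\big)^{-1}=\mathscr T^{[N,N-p]}_{(b,0)},\qquad \big(L_a^{[N-q]}\big)^{-1}\mathscr T^{[N-q,N]}_{(0,a-1)}L_a=\mathscr T^{[N-q,N]}_{(0,a)}.\]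
   Context: All matrices are indexed from $0$. $\mu$ is a $q\times p$ matrix of real measures with finite moments. For $r,n\ge1$, $X^{[n]}_{[r]}(x)$ is the $n\times r$ matrix whose row $k$ is $x^{\lfloor k/r\rfloor}e_{k\bmod r}^\top$ ($e_0,\dots,e_{r-1}$ standard basis of $\mathbb R^r$). $\Lambda^{[n,n+r]}_{[r]}$ is the $n\times(n+r)$ matrix with entries $\delta_{j,i+r}$. $\mathfrak X_{[r,1]}(x)$ is the $r\times r$ matrix with $(\mathfrak X_{[r,1]})_{i,i+1}=1$ ($0\le i\le r-2$), $(\mathfrak X_{[r,1]})_{r-1,0}=x$, other entries $0$. Christoffel perturbations $\mathrm d\mu_{(n,m)}:=\mathfrak X_{[q,1]}^n\,\mathrm d\mu\,(\mathfrak X_{[p,1]}^m)^\top$, with moment matrices $\mathscr M_{N,(n,m)}:=\int X^{[N]}_{[q]}\,\mathrm d\mu_{(n,m)}\,(X^{[N]}_{[p]})^\top$; $(n,m)=(0,0)$ is $\mu$ itself. *)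

theory Defs
  imports "HOL-Analysis.Analysis" "Jordan_Normal_Form.Gauss_Jordan_Elimination"
begin

text \<open>Matrices are Jordan_Normal_Form matrices, indexed from 0.\<close>

definition minv :: "real mat \<Rightarrow> real mat" where
  "minv A = the (mat_inverse A)"

definition lead :: "nat \<Rightarrow> real mat \<Rightarrow> real mat" where
  "lead k A = mat k k (\<lambda>(i,j). A $$ (i,j))"

definition lower_unitriangular :: "real mat \<Rightarrow> bool" where
  "lower_unitriangular A \<longleftrightarrow> (\<forall>i<dim_row A. \<forall>j<dim_col A.
      (i < j \<longrightarrow> A $$ (i,j) = 0) \<and> (i = j \<longrightarrow> A $$ (i,j) = 1))"

definition Xmon :: "nat \<Rightarrow> nat \<Rightarrow> real \<Rightarrow> real mat" where
  "Xmon r n x = mat n r (\<lambda>(k,j). if j = k mod r then x ^ (k div r) else 0)"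

text \<open>Lambda^{[n,n+r]}_{[r]} (here with explicit column count c = n + r): entries delta_{j,i+r}.\<close>
definition Lam :: "nat \<Rightarrow> nat \<Rightarrow> nat \<Rightarrow> real mat" where
  "Lam r n c = mat n c (\<lambda>(i,j). if j = i + r then 1 else 0)"

definition frakX :: "nat \<Rightarrow> real \<Rightarrow> real mat" where
  "frakX r x = mat r r (\<lambda>(i,j). if i + 1 < r \<and> j = i + 1 then 1
                               else if i = r - 1 \<and> j = 0 then x else 0)"

text \<open>A real (signed) measure is represented as a difference mup - mum of two
  finite Borel measures; integration against it.\<close>
definition sint :: "real measure \<Rightarrow> real measure \<Rightarrow> (real \<Rightarrow> real) \<Rightarrow> real" where
  "sint M1 M2 f = integral\<^sup>L M1 f - integral\<^sup>L M2 f"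

text \<open>Moment matrix M_{N,(n,m)} of the Christoffel perturbation
  d mu_(n,m) = frakX_q^n d mu (frakX_p^m)^T of the q x p matrix of measures mu = mup - mum.\<close>
definition momMat :: "nat \<Rightarrow> nat \<Rightarrow> (nat \<Rightarrow> nat \<Rightarrow> real measure) \<Rightarrow> (nat \<Rightarrow> nat \<Rightarrow> real measure)
    \<Rightarrow> nat \<Rightarrow> nat \<Rightarrow> nat \<Rightarrow> real mat" where
  "momMat q p mup mum N n m = mat N N (\<lambda>(r,s).
     \<Sum>k<q. \<Sum>l<p. sint (mup k l) (mum k l)
        (\<lambda>x. (Xmon q N x * (frakX q x ^\<^sub>m n)) $$ (r,k) * (Xmon p N x * (frakX p x ^\<^sub>m m)) $$ (s,l)))"

definition real_borel_fm :: "real measure \<Rightarrow> bool" where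
  "real_borel_fm M \<longleftrightarrow> sets M = sets borel \<and> finite_measure M \<and> (\<forall>k::nat. integrable M (\<lambda>x. \<bar>x\<bar> ^ k))"

end

theory Submission
  imports Defs "Jordan_Normal_Form.Determinant"
begin

(* Truncation to the leading k x k block is multiplicative
   on products A B with B upper (or A lower) triangular, hence commutes with inverting a triangular
   matrix.  So (U_b^[N-p])^-1 = (U_(b-1,0)^[N-p])^-1 U_(b,0)^[N-p], and in
   U_b T_(b-1,0) (U_b^[N-p])^-1 the factors U_(b-1,0) and U_(b-1,0)^[N-p] cancel against their
   inverses.  The identity for L is the mirror image. *)

lemma minv_inverse:
  assumes A: "A \<in> carrier_mat n n" and det: "Determinant.det A \<noteq> 0"
  shows "A * minv A = 1\<^sub>m n" "minv A * A = 1\<^sub>m n" "minv A \<in> carrier_mat n n"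
proof -
  obtain B where "mat_inverse A = Some B"
    using mat_inverse(1)[OF A] det_non_zero_imp_unit[OF A det] by fastforce
  then show "A * minv A = 1\<^sub>m n" "minv A * A = 1\<^sub>m n" "minv A \<in> carrier_mat n n"
    using mat_inverse(2)[OF A] unfolding minv_def by auto
qed

lemma minv_eqI:
  assumes A: "A \<in> carrier_mat n n" and B: "B \<in> carrier_mat n n" and AB: "A * B = 1\<^sub>m n"
  shows "minv A = B"
proof -
  have "Determinant.det A \<noteq> 0"
    using det_mult[OF A B] AB by auto
  note inv = minv_inverse[OF A this]
  have "minv A = minv A * (A * B)"
    using AB inv(3) by simp
  also have "\<dots> = (minv A * A) * B"
    using assoc_mult_mat[OF inv(3) A B] by simp
  finally show ?thesis
    using inv(2) B by simp
qed

lemma invertible_mat_det: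
  assumes A: "A \<in> carrier_mat n n" and "invertible_mat A"
  shows "Determinant.det A \<noteq> 0"
proof -
  obtain B where AB: "A * B = 1\<^sub>m n" and BA: "B * A = 1\<^sub>m (dim_row B)"
    using assms unfolding invertible_mat_def inverts_mat_def by auto
  have "B \<in> carrier_mat n n"
    using arg_cong[OF AB, of dim_col] arg_cong[OF BA, of dim_col] A by auto
  then show ?thesis
    using det_mult[OF A] AB by fastforce
qed

lemma lower_unitriangular_det:
  assumes A: "A \<in> carrier_mat n n" and "lower_unitriangular A"
  shows "Determinant.det A = 1"
proof -
  have "Determinant.det A = prod_list (diag_mat A)"
    by (rule det_lower_triangular[OF _ A]) (use assms in \<open>auto simp: lower_unitriangular_def\<close>)
  also have "diag_mat A = replicate n 1"
    using assms by (auto simp: lower_unitriangular_def diag_mat_def map_replicate_trivial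
        intro: nth_equalityI)
  finally show ?thesis
    by simp
qed

lemma lower_unitriangular_transpose:
  assumes "A \<in> carrier_mat n n" and "lower_unitriangular A"
  shows "upper_triangular (transpose_mat A)"
  using assms by (auto simp: lower_unitriangular_def upper_triangular_def)

lemma mult_inverse_cancel:
  fixes A X Y B :: "'a :: semiring_1 mat"
  assumes "A \<in> carrier_mat m n" "X \<in> carrier_mat n n" "Y \<in> carrier_mat n n" "B \<in> carrier_mat n l"
    and "X * Y = 1\<^sub>m n"
  shows "A * X * (Y * B) = A * B"
proof -
  have "X * (Y * B) = B"
    using assms(2-5) by (simp flip: assoc_mult_mat)
  then show ?thesis
    using assoc_mult_mat[OF assms(1,2) mult_carrier_mat[OF assms(3,4)]] by simp
qed

lemma dim_lead [simp]: "dim_row (lead k A) = k" "dim_col (lead k A) = k"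
  by (simp_all add: lead_def)

lemma lead_carrier [simp]: "lead k A \<in> carrier_mat k k"
  by (simp add: carrier_matI)

lemma lead_index [simp]: "i < k \<Longrightarrow> j < k \<Longrightarrow> lead k A $$ (i, j) = A $$ (i, j)"
  by (simp add: lead_def)

lemma lead_one: "k \<le> n \<Longrightarrow> lead k (1\<^sub>m n) = 1\<^sub>m k"
  by (intro eq_matI) auto

lemma lead_transpose:
  "k \<le> dim_row A \<Longrightarrow> k \<le> dim_col A \<Longrightarrow> lead k (transpose_mat A) = transpose_mat (lead k A)"
  by (intro eq_matI) auto

lemma lead_mult_upper:
  assumes A: "A \<in> carrier_mat n n" and B: "B \<in> carrier_mat n n" and "upper_triangular B"
    and "k \<le> n"
  shows "lead k (A * B) = lead k A * lead k B"
proof (rule eq_matI)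
  fix i j assume "i < dim_row (lead k A * lead k B)" "j < dim_col (lead k A * lead k B)"
  then have ij: "i < k" "j < k"
    by auto
  have "(A * B) $$ (i, j) = (\<Sum>l<n. A $$ (i, l) * B $$ (l, j))"
    using ij assms by (simp add: scalar_prod_def lessThan_atLeast0)
  also have "\<dots> = (\<Sum>l<k. A $$ (i, l) * B $$ (l, j))"
    using ij assms by (intro sum.mono_neutral_right) (auto simp: upper_triangular_def)
  also have "\<dots> = (lead k A * lead k B) $$ (i, j)"
    using ij by (simp add: scalar_prod_def lessThan_atLeast0)
  finally show "lead k (A * B) $$ (i, j) = (lead k A * lead k B) $$ (i, j)"
    using ij by simp
qed auto

lemma lead_mult_lower:
  assumes A: "A \<in> carrier_mat n n" and B: "B \<in> carrier_mat n n"
    and "upper_triangular (transpose_mat A)" and k: "k \<le> n"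
  shows "lead k (A * B) = lead k A * lead k B"
proof -
  have "transpose_mat (lead k (A * B)) = lead k (transpose_mat (A * B))"
    using A B k by (simp add: lead_transpose)
  also have "\<dots> = lead k (transpose_mat B * transpose_mat A)"
    using transpose_mult[OF A B] by simp
  also have "\<dots> = lead k (transpose_mat B) * lead k (transpose_mat A)"
    using assms by (intro lead_mult_upper) auto
  also have "\<dots> = transpose_mat (lead k A * lead k B)"
    using A B k by (simp add: lead_transpose transpose_mult[OF lead_carrier lead_carrier])
  finally show ?thesis
    by simp
qed

lemma lead_minv_upper:
  assumes U: "U \<in> carrier_mat n n" and "upper_triangular U" and det: "Determinant.det U \<noteq> 0"
    and k: "k \<le> n"
  shows "lead k (minv U) * lead k U = 1\<^sub>m k" "lead k U * lead k (minv U) = 1\<^sub>m k"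
proof -
  note inv = minv_inverse[OF U det]
  show left: "lead k (minv U) * lead k U = 1\<^sub>m k"
    using lead_mult_upper[OF inv(3) assms(1,2) k] inv(2) lead_one[OF k] by simp
  show "lead k U * lead k (minv U) = 1\<^sub>m k"
    by (rule mat_mult_left_right_inverse[OF _ _ left]) auto
qed

lemma lead_minv_lower:
  assumes L: "L \<in> carrier_mat n n" and "upper_triangular (transpose_mat L)"
    and det: "Determinant.det L \<noteq> 0" and k: "k \<le> n"
  shows "lead k L * lead k (minv L) = 1\<^sub>m k" "lead k (minv L) * lead k L = 1\<^sub>m k"
proof -
  note inv = minv_inverse[OF L det]
  show right: "lead k L * lead k (minv L) = 1\<^sub>m k"
    using lead_mult_lower[OF L inv(3) assms(2) k] inv(1) lead_one[OF k] by simp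
  show "lead k (minv L) * lead k L = 1\<^sub>m k"
    by (rule mat_mult_left_right_inverse[OF _ _ right]) auto
qed

lemma upper_connection_intertwines:
  assumes U0: "U0 \<in> carrier_mat n n" "upper_triangular U0" "Determinant.det U0 \<noteq> 0"
    and U1: "U1 \<in> carrier_mat n n" "upper_triangular U1" "Determinant.det U1 \<noteq> 0"
    and T: "T \<in> carrier_mat n k" and k: "k \<le> n"
  shows "minv U1 * U0 * (minv U0 * T * lead k U0) * minv (lead k (minv U1 * U0))
    = minv U1 * T * lead k U1"
proof -
  note inv0 = minv_inverse[OF U0(1,3)] and inv1 = minv_inverse[OF U1(1,3)]
  note lead0 = lead_minv_upper[OF U0 k] and lead1 = lead_minv_upper[OF U1 k]
  have "lead k (minv U1 * U0) * (lead k (minv U0) * lead k U1)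
      = lead k (minv U1) * lead k U0 * (lead k (minv U0) * lead k U1)"
    using lead_mult_upper[OF inv1(3) U0(1,2) k] by simp
  also have "\<dots> = 1\<^sub>m k"
    using mult_inverse_cancel[OF lead_carrier lead_carrier lead_carrier lead_carrier lead0(2)]
      lead1(1) by simp
  finally have minv_lead: "minv (lead k (minv U1 * U0)) = lead k (minv U0) * lead k U1"
    by (rule minv_eqI[OF lead_carrier mult_carrier_mat[OF lead_carrier lead_carrier]])
  have "minv U1 * U0 * (minv U0 * T * lead k U0) * minv (lead k (minv U1 * U0))
      = minv U1 * U0 * (minv U0 * (T * lead k U0)) * (lead k (minv U0) * lead k U1)"
    unfolding minv_lead using assoc_mult_mat[OF inv0(3) T lead_carrier] by simp
  also have "\<dots> = minv U1 * (T * lead k U0) * (lead k (minv U0) * lead k U1)"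
    using mult_inverse_cancel[OF inv1(3) U0(1) inv0(3) mult_carrier_mat[OF T lead_carrier] inv0(1)]
    by simp
  also have "\<dots> = minv U1 * T * lead k U0 * (lead k (minv U0) * lead k U1)"
    using assoc_mult_mat[OF inv1(3) T lead_carrier] by simp
  also have "\<dots> = minv U1 * T * lead k U1"
    by (rule mult_inverse_cancel[OF mult_carrier_mat[OF inv1(3) T] lead_carrier lead_carrier
          lead_carrier lead0(2)])
  finally show ?thesis .
qed

lemma lower_connection_intertwines:
  assumes L0: "L0 \<in> carrier_mat n n" "upper_triangular (transpose_mat L0)" "Determinant.det L0 \<noteq> 0"
    and L1: "L1 \<in> carrier_mat n n" "upper_triangular (transpose_mat L1)" "Determinant.det L1 \<noteq> 0"
    and T: "T \<in> carrier_mat k n" and k: "k \<le> n"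
  shows "minv (lead k (L0 * minv L1)) * (lead k L0 * T * minv L0) * (L0 * minv L1)
    = lead k L1 * T * minv L1"
proof -
  note inv0 = minv_inverse[OF L0(1,3)] and inv1 = minv_inverse[OF L1(1,3)]
  note lead0 = lead_minv_lower[OF L0 k] and lead1 = lead_minv_lower[OF L1 k]
  have "lead k (L0 * minv L1) * (lead k L1 * lead k (minv L0))
      = lead k L0 * lead k (minv L1) * (lead k L1 * lead k (minv L0))"
    using lead_mult_lower[OF L0(1) inv1(3) L0(2) k] by simp
  also have "\<dots> = 1\<^sub>m k"
    using mult_inverse_cancel[OF lead_carrier lead_carrier lead_carrier lead_carrier lead1(2)]
      lead0(1) by simp
  finally have minv_lead: "minv (lead k (L0 * minv L1)) = lead k L1 * lead k (minv L0)"
    by (rule minv_eqI[OF lead_carrier mult_carrier_mat[OF lead_carrier lead_carrier]])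
  have "minv (lead k (L0 * minv L1)) * (lead k L0 * T * minv L0) * (L0 * minv L1)
      = lead k L1 * lead k (minv L0) * (lead k L0 * (T * minv L0)) * (L0 * minv L1)"
    unfolding minv_lead using assoc_mult_mat[OF lead_carrier T inv0(3)] by simp
  also have "\<dots> = lead k L1 * (T * minv L0) * (L0 * minv L1)"
    using mult_inverse_cancel[OF lead_carrier lead_carrier lead_carrier
        mult_carrier_mat[OF T inv0(3)] lead0(2)]
    by simp
  also have "\<dots> = lead k L1 * T * minv L0 * (L0 * minv L1)"
    using assoc_mult_mat[OF lead_carrier T inv0(3)] by simp
  also have "\<dots> = lead k L1 * T * minv L1"
    by (rule mult_inverse_cancel[OF mult_carrier_mat[OF lead_carrier T] inv0(3) L0(1) inv1(3)
          inv0(2)])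
  finally show ?thesis .
qed

theorem mainTheorem8:
  fixes p q N a b :: nat
    and mup mum :: "nat \<Rightarrow> nat \<Rightarrow> real measure"
    and L U :: "nat \<times> nat \<Rightarrow> real mat"
  assumes "p \<ge> 1" "q \<ge> 1" "N > max p q"
    and "1 \<le> b" "b \<le> q" "1 \<le> a" "a \<le> p"
    and mu: "\<And>i j. i < q \<Longrightarrow> j < p \<Longrightarrow> real_borel_fm (mup i j) \<and> real_borel_fm (mum i j)"
    and GB: "\<And>n m. (n, m) \<in> {(b, 0), (b - 1, 0), (0, a - 1), (0, a)} \<Longrightarrow>
               L (n, m) \<in> carrier_mat N N \<and> U (n, m) \<in> carrier_mat N N \<and>
               lower_unitriangular (L (n, m)) \<and> upper_triangular (U (n, m)) \<and>
               invertible_mat (U (n, m)) \<and>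
               momMat q p mup mum N n m = minv (L (n, m)) * minv (U (n, m))"
  shows "(let TU = (\<lambda>nm. minv (U nm) * transpose_mat (Lam p (N - p) N) * lead (N - p) (U nm));
              Ub = minv (U (b, 0)) * U (b - 1, 0)
          in Ub * TU (b - 1, 0) * minv (lead (N - p) Ub) = TU (b, 0))
       \<and> (let TL = (\<lambda>nm. lead (N - q) (L nm) * Lam q (N - q) N * minv (L nm));
              La = L (0, a - 1) * minv (L (0, a))
          in minv (lead (N - q) La) * TL (0, a - 1) * La = TL (0, a))"
proof -
  have lam: "transpose_mat (Lam p (N - p) N) \<in> carrier_mat N (N - p)"
    "Lam q (N - q) N \<in> carrier_mat (N - q) N"
    by (simp_all add: Lam_def)
  have upper: "U (n, 0) \<in> carrier_mat N N" "upper_triangular (U (n, 0))"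
    "Determinant.det (U (n, 0)) \<noteq> 0"
    if "n \<in> {b - 1, b}" for n
  proof -
    have "(n, 0) \<in> {(b, 0), (b - 1, 0), (0, a - 1), (0, a)}"
      using that by blast
    from GB[OF this] show "U (n, 0) \<in> carrier_mat N N" "upper_triangular (U (n, 0))"
      "Determinant.det (U (n, 0)) \<noteq> 0"
      using invertible_mat_det[of "U (n, 0)" N] by blast+
  qed
  have lower: "L (0, m) \<in> carrier_mat N N" "upper_triangular (transpose_mat (L (0, m)))"
    "Determinant.det (L (0, m)) \<noteq> 0"
    if "m \<in> {a - 1, a}" for m
  proof -
    have "(0, m) \<in> {(b, 0), (b - 1, 0), (0, a - 1), (0, a)}"
      using that by blast
    from GB[OF this] show "L (0, m) \<in> carrier_mat N N" "upper_triangular (transpose_mat (L (0, m)))"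
      "Determinant.det (L (0, m)) \<noteq> 0"
      using lower_unitriangular_transpose[of "L (0, m)" N] lower_unitriangular_det[of "L (0, m)" N]
      by simp_all
  qed
  show ?thesis
    unfolding Let_def
    by (intro conjI upper_connection_intertwines[OF upper upper lam(1)]
        lower_connection_intertwines[OF lower lower lam(2)]) simp_all
qed

end
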